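(* Let $F$ be a field of characteristic not 2 or 3 and $E$ an étale cubic $F$-algebra. For a cube $v=(a,e,f,b)\in V_E(F)$ define $\tilde\phi(v)=(Q,\beta)$, a pair consisting of a quadratic form $Q:E^2\to E$ and a quadratic map $\beta:E^2\to E^2$, by \[Q(x,y)=(e^\#-af)x^2+(-ab-2ef+\mathrm{Tr}_E(ef))xy+(f^\#-be)y^2,\] \[\beta(x,y)=\big(-ex^\#-by^\#-(fx)\times y,\ ax^\#+fy^\#+(ey)\times x\big).\] Then: (i) $\tilde\phi$ is injective. (ii) For $g\in GL_2(E)^0$ and $\sigma\in S_E(F)$, $\tilde\phi(g\cdot v)={}^tg^{-1}\cdot\tilde\phi(v)$ and $\tilde\phi(\sigma\cdot v)=\sigma\cdot\tilde\phi(v)$, where $h\in GL_2(E)$ acts on pairs by $h\cdot(Q,\beta)=(Q\circ h^{-1},h\circ\beta\circ h^{-1})$ and $\sigma$ acts by $\sigma\cdot(Q,\beta)=(\sigma\circ Q\circ\sigma^{-1},\sigma\circ\beta\circ\sigma^{-1})$ with $\sigma$ acting coordinatewise on $E^2$. (iii) For every cube $v$ with $\Delta_E(v)\neq0$, $\tilde\phi(v)=(Q,\beta)$ makes $E^2$ into an $E$-twisted composition algebra.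
   Context: Étale cubic $E$ with norm $N_E$, trace $\mathrm{Tr}_E$, adjoint $x^\#$ ($xx^\#=N_E(x)$, for $E=F^3$: $(x_1,x_2,x_3)^\#=(x_2x_3,x_3x_1,x_1x_2)$), $x\times y=(x+y)^\#-x^\#-y^\#$. An $E$-twisted composition algebra structure on $C=E^2$ is a pair $(Q,\beta)$: $Q:C\to E$ nondegenerate quadratic with polar $b_Q$, $\beta:C\to C$ quadratic with $\beta(av)=a^\#\beta(v)$, $Q(\beta(v))=Q(v)^\#$, $b_Q(v,\beta(v))\in F$ for all $v$. $GL_2(E)^0=\{g\in GL_2(E):\det g\in F^\times\}$ and $S_E(F)=\mathrm{Aut}_F(E)$ act on $V_E(F)=F\oplus E\oplus E\oplus F$ via the Galois-descended form of the split action (for $E=F^3$: $V=F^2\otimes F^2\otimes F^2$, $a,b$ coefficients of $u_1^{\otimes3},u_2^{\otimes3}$, $e_i$ (resp. $f_i$) coefficient of the basis vector with $u_2$ (resp. $u_1$) in factor $i$ and $u_1$ (resp. $u_2$) elsewhere, $(g_1,g_2,g_3)$ of common determinant $d$ acting by $d^{-1}g_1\otimes g_2\otimes g_3$, $S_3$ permuting factors); $\sigma\in S_E(F)$ acts by $(a,e,f,b)\mapsto(a,\sigma e,\sigma f,b)$. $\Delta_E(a,e,f,b)=a^2b^2-2ab\mathrm{Tr}_E(ef)+\mathrm{Tr}_E(e^2f^2)+4aN_E(f)+4bN_E(e)-2\mathrm{Tr}_E(e^\#f^\#)$. *)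

theory Defs
  imports "HOL-Analysis.Analysis"
begin

text \<open>An etale cubic F-algebra E is modelled (up to isomorphism, after choosing an F-basis)
  as the F-vector space F^3 (type 'f^3) equipped with an F-bilinear, commutative, associative
  multiplication m with unit u whose trace form is nondegenerate.\<close>

type_synonym 'f Ealg = "'f^3"
type_synonym 'f Emul = "'f^3 \<Rightarrow> 'f^3 \<Rightarrow> 'f^3"
type_synonym 'f Cpair = "('f^3) \<times> ('f^3)"
type_synonym 'f cube = "'f \<times> ('f^3) \<times> ('f^3) \<times> 'f"
type_synonym 'f Emat = "('f^3) \<times> ('f^3) \<times> ('f^3) \<times> ('f^3)"  \<comment> \<open>(g11, g12, g21, g22) in M_2(E)\<close>

definition mult_mat :: "'f::field Emul \<Rightarrow> 'f^3 \<Rightarrow> 'f^3^3" where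
  "mult_mat m x = (\<chi> i j. (m x (axis j 1)) $ i)"

definition Etr :: "'f::field Emul \<Rightarrow> 'f^3 \<Rightarrow> 'f" where
  "Etr m x = trace (mult_mat m x)"

definition Enorm :: "'f::field Emul \<Rightarrow> 'f^3 \<Rightarrow> 'f" where
  "Enorm m x = det (mult_mat m x)"

text \<open>Second coefficient of the characteristic polynomial of multiplication by x.\<close>
definition Esec :: "'f::field Emul \<Rightarrow> 'f^3 \<Rightarrow> 'f" where
  "Esec m x = ((trace (mult_mat m x))^2 - trace (mult_mat m x ** mult_mat m x)) / 2"

text \<open>The adjoint x^# = x^2 - Tr(x) x + S(x), so that x x^# = N(x) (Cayley--Hamilton).\<close>
definition Eadj :: "'f::field Emul \<Rightarrow> 'f^3 \<Rightarrow> 'f^3 \<Rightarrow> 'f^3" where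
  "Eadj m u x = m x x - Etr m x *s x + Esec m x *s u"

definition Ecross :: "'f::field Emul \<Rightarrow> 'f^3 \<Rightarrow> 'f^3 \<Rightarrow> 'f^3 \<Rightarrow> 'f^3" where
  "Ecross m u x y = Eadj m u (x + y) - Eadj m u x - Eadj m u y"

definition etale_cubic :: "'f::field Emul \<Rightarrow> 'f^3 \<Rightarrow> bool" where
  "etale_cubic m u \<longleftrightarrow>
     (\<forall>x y z. m (x + y) z = m x z + m y z) \<and>
     (\<forall>c x y. m (c *s x) y = c *s m x y) \<and>
     (\<forall>x y. m x y = m y x) \<and>
     (\<forall>x y z. m (m x y) z = m x (m y z)) \<and>
     (\<forall>x. m u x = x) \<and>
     (\<forall>x. (\<forall>y. Etr m (m x y) = 0) \<longrightarrow> x = 0)"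

text \<open>F-algebra automorphisms of E, i.e. S_E(F) = Aut_F(E).\<close>
definition F_alg_aut :: "'f::field Emul \<Rightarrow> 'f^3 \<Rightarrow> ('f^3 \<Rightarrow> 'f^3) \<Rightarrow> bool" where
  "F_alg_aut m u \<sigma> \<longleftrightarrow> bij \<sigma> \<and> (\<forall>x y. \<sigma> (x + y) = \<sigma> x + \<sigma> y) \<and>
     (\<forall>c x. \<sigma> (c *s x) = c *s \<sigma> x) \<and> (\<forall>x y. \<sigma> (m x y) = m (\<sigma> x) (\<sigma> y)) \<and> \<sigma> u = u"

definition phi_Q :: "'f::field Emul \<Rightarrow> 'f^3 \<Rightarrow> 'f cube \<Rightarrow> 'f Cpair \<Rightarrow> 'f^3" where
  "phi_Q m u v w = (case v of (a, e, f, b) \<Rightarrow> (case w of (x, y) \<Rightarrow>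
      m (Eadj m u e - a *s f) (m x x)
    + m ((- (a * b)) *s u - 2 *s m e f + Etr m (m e f) *s u) (m x y)
    + m (Eadj m u f - b *s e) (m y y)))"

definition phi_beta :: "'f::field Emul \<Rightarrow> 'f^3 \<Rightarrow> 'f cube \<Rightarrow> 'f Cpair \<Rightarrow> 'f Cpair" where
  "phi_beta m u v w = (case v of (a, e, f, b) \<Rightarrow> (case w of (x, y) \<Rightarrow>
     (- m e (Eadj m u x) - b *s Eadj m u y - Ecross m u (m f x) y,
      a *s Eadj m u x + m f (Eadj m u y) + Ecross m u (m e y) x)))"

definition phi :: "'f::field Emul \<Rightarrow> 'f^3 \<Rightarrow> 'f cube \<Rightarrow> ('f Cpair \<Rightarrow> 'f^3) \<times> ('f Cpair \<Rightarrow> 'f Cpair)" where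
  "phi m u v = (phi_Q m u v, phi_beta m u v)"

definition Delta :: "'f::field Emul \<Rightarrow> 'f^3 \<Rightarrow> 'f cube \<Rightarrow> 'f" where
  "Delta m u v = (case v of (a, e, f, b) \<Rightarrow>
     a^2 * b^2 - 2 * a * b * Etr m (m e f) + Etr m (m (m e e) (m f f))
     + 4 * a * Enorm m f + 4 * b * Enorm m e - 2 * Etr m (m (Eadj m u e) (Eadj m u f)))"

definition Emat_det :: "'f::field Emul \<Rightarrow> 'f Emat \<Rightarrow> 'f^3" where
  "Emat_det m g = (case g of (g11, g12, g21, g22) \<Rightarrow> m g11 g22 - m g12 g21)"

definition Emat_apply :: "'f::field Emul \<Rightarrow> 'f Emat \<Rightarrow> 'f Cpair \<Rightarrow> 'f Cpair" where
  "Emat_apply m h w = (case h of (h11, h12, h21, h22) \<Rightarrow> (case w of (x, y) \<Rightarrow>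
     (m h11 x + m h12 y, m h21 x + m h22 y)))"

definition Emat_trans :: "'f Emat \<Rightarrow> 'f Emat" where
  "Emat_trans g = (case g of (g11, g12, g21, g22) \<Rightarrow> (g11, g21, g12, g22))"

definition Einv :: "'f::field Emul \<Rightarrow> 'f^3 \<Rightarrow> 'f^3 \<Rightarrow> 'f^3" where
  "Einv m u z = (THE w. m z w = u)"

definition Emat_inv :: "'f::field Emul \<Rightarrow> 'f^3 \<Rightarrow> 'f Emat \<Rightarrow> 'f Emat" where
  "Emat_inv m u g = (case g of (g11, g12, g21, g22) \<Rightarrow>
     (let di = Einv m u (Emat_det m g) in (m di g22, - m di g12, - m di g21, m di g11)))"

definition GL2_0 :: "'f::field Emul \<Rightarrow> 'f^3 \<Rightarrow> 'f Emat \<Rightarrow> bool" where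
  "GL2_0 m u g \<longleftrightarrow> (\<exists>d. d \<noteq> 0 \<and> Emat_det m g = d *s u)"

definition det_scalar :: "'f::field Emul \<Rightarrow> 'f^3 \<Rightarrow> 'f Emat \<Rightarrow> 'f" where
  "det_scalar m u g = (THE d. Emat_det m g = d *s u)"

text \<open>The F-valued cubic form on E^2 attached to a cube (the pairing of the cube with
  (x_1 u_1^* + y_1 u_2^*) (x) (x_2 u_1^* + y_2 u_2^*) (x) (x_3 u_1^* + y_3 u_2^*) in the split case).\<close>
definition cube_form :: "'f::field Emul \<Rightarrow> 'f^3 \<Rightarrow> 'f cube \<Rightarrow> 'f Cpair \<Rightarrow> 'f" where
  "cube_form m u v w = (case v of (a, e, f, b) \<Rightarrow> (case w of (x, y) \<Rightarrow>
     a * Enorm m x + Etr m (m e (m y (Eadj m u x))) + Etr m (m f (m x (Eadj m u y))) + b * Enorm m y))"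

text \<open>g . v is the cube whose form is w |-> det(g)^{-1} P_v(w g), w a row vector; in the split
  case this is exactly d^{-1} g_1 (x) g_2 (x) g_3.\<close>
definition cube_act :: "'f::field Emul \<Rightarrow> 'f^3 \<Rightarrow> 'f Emat \<Rightarrow> 'f cube \<Rightarrow> 'f cube" where
  "cube_act m u g v = (THE v'. \<forall>w. cube_form m u v' w
       = inverse (det_scalar m u g) * cube_form m u v (Emat_apply m (Emat_trans g) w))"

definition cube_gal :: "('f^3 \<Rightarrow> 'f^3) \<Rightarrow> 'f cube \<Rightarrow> 'f cube" where
  "cube_gal \<sigma> v = (case v of (a, e, f, b) \<Rightarrow> (a, \<sigma> e, \<sigma> f, b))"

definition pair_act :: "'f::field Emul \<Rightarrow> 'f^3 \<Rightarrow> 'f Emat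
    \<Rightarrow> ('f Cpair \<Rightarrow> 'f^3) \<times> ('f Cpair \<Rightarrow> 'f Cpair) \<Rightarrow> ('f Cpair \<Rightarrow> 'f^3) \<times> ('f Cpair \<Rightarrow> 'f Cpair)" where
  "pair_act m u h p = (case p of (Q, \<beta>) \<Rightarrow>
     (Q \<circ> Emat_apply m (Emat_inv m u h),
      Emat_apply m h \<circ> \<beta> \<circ> Emat_apply m (Emat_inv m u h)))"

definition pair_gal :: "('f^3 \<Rightarrow> 'f^3)
    \<Rightarrow> ('f Cpair \<Rightarrow> 'f^3) \<times> ('f Cpair \<Rightarrow> 'f Cpair) \<Rightarrow> ('f Cpair \<Rightarrow> 'f^3) \<times> ('f Cpair \<Rightarrow> 'f Cpair)" where
  "pair_gal \<sigma> p = (case p of (Q, \<beta>) \<Rightarrow>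
     (\<sigma> \<circ> Q \<circ> map_prod (inv \<sigma>) (inv \<sigma>),
      map_prod \<sigma> \<sigma> \<circ> \<beta> \<circ> map_prod (inv \<sigma>) (inv \<sigma>)))"

definition Cscal :: "'f::field Emul \<Rightarrow> 'f^3 \<Rightarrow> 'f Cpair \<Rightarrow> 'f Cpair" where
  "Cscal m a w = (m a (fst w), m a (snd w))"

definition polar :: "('a::ab_group_add \<Rightarrow> 'b::ab_group_add) \<Rightarrow> 'a \<Rightarrow> 'a \<Rightarrow> 'b" where
  "polar q v w = q (v + w) - q v - q w"

definition twisted_comp_alg :: "'f::field Emul \<Rightarrow> 'f^3 \<Rightarrow> ('f Cpair \<Rightarrow> 'f^3) \<Rightarrow> ('f Cpair \<Rightarrow> 'f Cpair) \<Rightarrow> bool" where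
  "twisted_comp_alg m u Q \<beta> \<longleftrightarrow>
     \<comment> \<open>Q is an E-valued quadratic form over E with E-bilinear polar b_Q\<close>
     (\<forall>a v. Q (Cscal m a v) = m (m a a) (Q v)) \<and>
     (\<forall>v v' w. polar Q (v + v') w = polar Q v w + polar Q v' w) \<and>
     (\<forall>a v w. polar Q (Cscal m a v) w = m a (polar Q v w)) \<and>
     \<comment> \<open>b_Q nondegenerate\<close>
     (\<forall>v. (\<forall>w. polar Q v w = 0) \<longrightarrow> v = 0) \<and>
     \<comment> \<open>beta is a quadratic map (over F) with beta(a v) = a^# beta(v)\<close>
     (\<forall>v v' w. polar \<beta> (v + v') w = polar \<beta> v w + polar \<beta> v' w) \<and>
     (\<forall>c v w. polar \<beta> (Cscal m (c *s u) v) w = Cscal m (c *s u) (polar \<beta> v w)) \<and>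
     (\<forall>a v. \<beta> (Cscal m a v) = Cscal m (Eadj m u a) (\<beta> v)) \<and>
     (\<forall>v. Q (\<beta> v) = Eadj m u (Q v)) \<and>
     (\<forall>v. \<exists>c. polar Q v (\<beta> v) = c *s u)"

end

theory Submission
  imports Defs "HOL-Algebra.Algebraic_Closure_Type"
begin

text \<open>The trace form of E is nondegenerate, so E has no nonzero nilpotents, and this forces a
  primitive element t: u, t, t^2 is an F-basis of E. Sending t to the three roots of its
  characteristic polynomial in an algebraic closure K of F gives an injective F-algebra map psi
  from E into the split algebra K^3 which carries trace, norm and adjoint of E to those of K^3.
  Each claim is a polynomial identity in E, or follows from one, so after applying psi it becomes
  an identity in the split case, settled by a Groebner basis computation. For GL_2(E)^0 the cube
  g . v is written down explicitly by expanding the cubic form of v at (x,y) g; for Aut_F(E) the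
  formulas commute with \<sigma> because \<sigma> preserves the trace; injectivity is read off from
  beta(u,0) = (-e, a u) and beta(0,u) = (-b u, f).\<close>

no_notation Formal_Power_Series.fps_nth (infixl \<open>$\<close> 75)

section \<open>Linear algebra in dimension three\<close>

lemma cayley_hamilton_3:
  fixes A :: "'a::field^3^3"
  assumes "(2::'a) \<noteq> 0"
  shows "A *v (A *v (A *v v)) - trace A *s (A *v (A *v v))
     + ((trace A ^ 2 - trace (A ** A)) / 2) *s (A *v v) - det A *s v = 0"
proof -
  have "2 *s (A *v (A *v (A *v v))) - 2 * trace A *s (A *v (A *v v))
     + (trace A ^ 2 - trace (A ** A)) *s (A *v v) - 2 * det A *s v = 0"
    by (simp add: vec_eq_iff forall_3 matrix_vector_mult_def sum_3 det_3 trace_def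
        matrix_matrix_mult_def) (intro conjI; Groebner_Basis.algebra)
  then show ?thesis
    using assms by (simp add: vec_eq_iff field_simps)
qed

lemma vec_linearI:
  fixes f :: "'a::field^'n \<Rightarrow> 'a^'m"
  assumes "\<And>x y. f (x + y) = f x + f y" and "\<And>c x. f (c *s x) = c *s f x"
  shows "Vector_Spaces.linear (*s) (*s) f"
  using assms by unfold_locales auto

definition det3 :: "'a::comm_ring_1^3 \<Rightarrow> 'a^3 \<Rightarrow> 'a^3 \<Rightarrow> 'a" where
  "det3 a b c = a$1*(b$2*c$3 - b$3*c$2) - a$2*(b$1*c$3 - b$3*c$1) + a$3*(b$1*c$2 - b$2*c$1)"

lemma det3_lincomb_1: "det3 (\<alpha> *s a + \<beta> *s b + \<gamma> *s c) b c = \<alpha> * det3 a b c"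
  and det3_lincomb_2: "det3 a (\<alpha> *s a + \<beta> *s b + \<gamma> *s c) c = \<beta> * det3 a b c"
  and det3_lincomb_3: "det3 a b (\<alpha> *s a + \<beta> *s b + \<gamma> *s c) = \<gamma> * det3 a b c"
  by (simp_all add: det3_def algebra_simps)

lemma cramer_3:
  fixes a b c z :: "'a::field^3"
  assumes "det3 a b c \<noteq> 0"
  shows "z = (det3 z b c / det3 a b c) *s a + (det3 a z c / det3 a b c) *s b
    + (det3 a b z / det3 a b c) *s c"
proof -
  have "det3 a b c *s z = det3 z b c *s a + det3 a z c *s b + det3 a b z *s c"
    by (simp add: vec_eq_iff forall_3 det3_def) (intro conjI; Groebner_Basis.algebra)
  with assms show ?thesis
    by (simp add: vec_eq_iff forall_3 field_simps)
qed

lemma span_3: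
  fixes a b c z :: "'a::field^3"
  assumes "det3 a b c \<noteq> 0"
  obtains \<alpha> \<beta> \<gamma> where "z = \<alpha> *s a + \<beta> *s b + \<gamma> *s c"
  by (rule that[OF cramer_3[OF assms]])

lemma coords_unique_3:
  fixes a b c :: "'a::field^3"
  assumes "det3 a b c \<noteq> 0"
    and eq: "\<alpha> *s a + \<beta> *s b + \<gamma> *s c = \<alpha>' *s a + \<beta>' *s b + \<gamma>' *s c"
  shows "\<alpha> = \<alpha>'" "\<beta> = \<beta>'" "\<gamma> = \<gamma>'"
  using arg_cong[OF eq, of "\<lambda>z. det3 z b c"] arg_cong[OF eq, of "\<lambda>z. det3 a z c"]
    arg_cong[OF eq, of "\<lambda>z. det3 a b z"] assms(1)
  by (simp_all add: det3_lincomb_1 det3_lincomb_2 det3_lincomb_3)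

section \<open>Etale cubic algebras\<close>

locale etale_cubic_algebra =
  fixes m :: "'f::field^3 \<Rightarrow> 'f^3 \<Rightarrow> 'f^3" and u :: "'f^3"
  assumes etale: "etale_cubic m u"
    and two_nonzero: "(2::'f) \<noteq> 0" and three_nonzero: "(3::'f) \<noteq> 0"
begin

lemma m_add_left: "m (x + y) z = m x z + m y z"
  and m_smult_left: "m (c *s x) y = c *s m x y"
  and m_commute: "m x y = m y x"
  and m_assoc: "m (m x y) z = m x (m y z)"
  and m_unit_left: "m u x = x"
  and trace_form_nondegenerate: "(\<And>y. Etr m (m x y) = 0) \<Longrightarrow> x = 0"
  using etale unfolding etale_cubic_def by auto

lemma m_unit_right: "m x u = x"
  using m_commute[of x u] by (simp only: m_unit_left)

lemma m_add_right: "m z (x + y) = m z x + m z y"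
  using m_add_left[of x y z] by (simp only: m_commute[of z])

lemma m_smult_right: "m y (c *s x) = c *s m y x"
  using m_smult_left[of c x y] by (simp only: m_commute[of y])

lemma m_zero_left: "m 0 y = 0"
  and m_minus_left: "m (- x) y = - m x y"
  using m_smult_left[of 0 0 y] m_smult_left[of "-1" x y]
  by (simp_all add: vector_sneg_minus1[symmetric])

lemma m_zero_right: "m y 0 = 0"
  and m_minus_right: "m y (- x) = - m y x"
  using m_zero_left[of y] m_minus_left[of x y] by (simp_all only: m_commute[of y])

lemma m_diff_left: "m (x - y) z = m x z - m y z"
  using m_add_left[of x "- y" z] by (simp add: m_minus_left)

lemma m_diff_right: "m z (x - y) = m z x - m z y"
  using m_diff_left[of x y z] by (simp only: m_commute[of z])

lemmas m_linear = m_add_left m_add_right m_smult_left m_smult_right m_zero_left m_zero_right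
  m_minus_left m_minus_right m_diff_left m_diff_right m_unit_left m_unit_right

lemma mult_mat_apply: "mult_mat m x *v y = m x y"
proof -
  have "Vector_Spaces.linear (*s) (*s) (m x)"
    by (rule vec_linearI) (simp_all add: m_add_right m_smult_right)
  then show ?thesis
    using matrix_works unfolding mult_mat_def matrix_def[symmetric] by blast
qed

lemma mult_mat_mult: "mult_mat m (m x y) = mult_mat m x ** mult_mat m y"
  by (simp add: matrix_eq mult_mat_apply matrix_vector_mul_assoc[symmetric] m_assoc)

lemma Etr_eq: "Etr m x = m x (axis 1 1) $ 1 + m x (axis 2 1) $ 2 + m x (axis 3 1) $ 3"
  by (simp add: Etr_def trace_def mult_mat_def sum_3)

lemma Etr_add: "Etr m (x + y) = Etr m x + Etr m y"
  and Etr_smult: "Etr m (c *s x) = c * Etr m x"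
  and Etr_diff: "Etr m (x - y) = Etr m x - Etr m y"
  and Etr_unit: "Etr m u = 3"
  by (simp_all add: Etr_eq m_add_left m_smult_left m_diff_left m_unit_left axis_def
      algebra_simps)

lemma Esec_eq: "Esec m x = ((Etr m x)^2 - Etr m (m x x)) / 2"
  by (simp add: Esec_def Etr_def mult_mat_mult)

lemma cayley_hamilton_E: "m x (m x x) - Etr m x *s m x x + Esec m x *s x - Enorm m x *s u = 0"
  using cayley_hamilton_3[OF two_nonzero, of "mult_mat m x" u]
  by (simp add: mult_mat_apply m_unit_right Esec_def Etr_def Enorm_def)

lemma m_Eadj: "m x (Eadj m u x) = Enorm m x *s u"
  using cayley_hamilton_E[of x] by (simp add: Eadj_def m_linear algebra_simps)

lemma unit_nonzero: "u \<noteq> 0"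
proof
  assume "u = 0"
  then have "axis 1 (1::'f) = 0"
    using m_unit_left[of "axis 1 1"] by (simp add: m_zero_left)
  then have "axis 1 (1::'f) $ 1 = 0"
    by simp
  then show False
    by simp
qed

lemma smult_unit_cancel: "c *s u = d *s u \<Longrightarrow> c = d"
  using unit_nonzero by (metis vector_mul_rcancel)

lemma trace_form_inj: "(\<And>y. Etr m (m x y) = Etr m (m x' y)) \<Longrightarrow> x = x'"
  using trace_form_nondegenerate[of "x - x'"] by (simp add: m_diff_left Etr_diff)

lemma Etr_square_zero:
  assumes "m w w = 0"
  shows "Etr m w = 0"
proof -
  have sw: "Esec m w *s w = Enorm m w *s u"
    using cayley_hamilton_E[of w] assms m_zero_right by (simp add: algebra_simps)
  show ?thesis
  proof (cases "Esec m w = 0")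
    case True
    then show ?thesis
      using Esec_eq[of w] assms two_nonzero by (simp add: Etr_eq m_zero_left)
  next
    case False
    define c where "c = Enorm m w / Esec m w"
    have w: "w = c *s u"
      using sw False by (simp add: c_def vec_eq_iff field_simps)
    then have "(c * c) *s u = 0"
      using assms by (simp add: m_smult_left m_smult_right m_unit_left)
    then have "w = 0"
      using w unit_nonzero by simp
    then show ?thesis
      by (simp add: Etr_eq m_zero_left)
  qed
qed

text \<open>E is reduced: a square-zero element w makes every w y square-zero, hence traceless.\<close>
lemma square_zero_imp_zero:
  assumes "m w w = 0"
  shows "w = 0"
proof (rule trace_form_nondegenerate)
  fix y
  have "m (m w y) (m w y) = m (m w w) (m y y)"
    by (metis m_assoc m_commute)
  then show "Etr m (m w y) = 0"
    using Etr_square_zero assms m_zero_left by simp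
qed

lemma exists_basis_with_unit: "\<exists>x y. det3 u x y \<noteq> 0"
proof -
  have "u$1 \<noteq> 0 \<or> u$2 \<noteq> 0 \<or> u$3 \<noteq> 0"
    using unit_nonzero by (auto simp: vec_eq_iff forall_3)
  then show ?thesis
  proof (elim disjE)
    assume "u$1 \<noteq> 0"
    then show ?thesis
      by (intro exI[of _ "axis 2 1"] exI[of _ "axis 3 1"]) (simp add: det3_def axis_def)
  next
    assume "u$2 \<noteq> 0"
    then show ?thesis
      by (intro exI[of _ "axis 3 1"] exI[of _ "axis 1 1"]) (simp add: det3_def axis_def)
  next
    assume "u$3 \<noteq> 0"
    then show ?thesis
      by (intro exI[of _ "axis 1 1"] exI[of _ "axis 2 1"]) (simp add: det3_def axis_def)
  qed
qed

text \<open>If no element generates E, then for a basis u, x, y every t satisfies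
  t^2 \<in> span(u, t); comparing coordinates for t = x, y, x + y, x - y and using
  x(xy) = x^2 y shows that x - c u squares to zero.\<close>
lemma square_zero_of_imprimitive:
  assumes D: "det3 u x y \<noteq> 0" and imprimitive: "\<And>t. det3 u t (m t t) = 0"
  shows "\<exists>c. m (x - c *s u) (x - c *s u) = 0"
proof -
  obtain A1 B1 C1 where xx: "m x x = A1 *s u + B1 *s x + C1 *s y" using span_3[OF D] .
  obtain A2 B2 C2 where yy: "m y y = A2 *s u + B2 *s x + C2 *s y" using span_3[OF D] .
  obtain A3 B3 C3 where xy: "m x y = A3 *s u + B3 *s x + C3 *s y" using span_3[OF D] .
  have "det3 u x (m x x) = C1 * det3 u x y"
    unfolding xx by (rule det3_lincomb_3)
  then have C1: "C1 = 0"
    using imprimitive[of x] D by simp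
  have "det3 u y (m y y) = - B2 * det3 u x y"
    unfolding yy by (simp add: det3_def algebra_simps)
  then have B2: "B2 = 0"
    using imprimitive[of y] D by simp
  have sq_sum: "m (x + y) (x + y)
      = (A1 + 2*A3 + A2) *s u + (B1 + 2*B3 + B2) *s x + (C1 + 2*C3 + C2) *s y"
    using xx yy xy by (simp add: m_add_left m_add_right m_commute[of y x] vec_eq_iff algebra_simps)
  have "det3 u (x + y) (m (x + y) (x + y))
      = ((C1 + 2*C3 + C2) - (B1 + 2*B3 + B2)) * det3 u x y"
    unfolding sq_sum by (simp add: det3_def algebra_simps)
  then have sum: "(C1 + 2*C3 + C2) - (B1 + 2*B3 + B2) = 0"
    using imprimitive[of "x + y"] D by simp
  have sq_diff: "m (x - y) (x - y)
      = (A1 - 2*A3 + A2) *s u + (B1 - 2*B3 + B2) *s x + (C1 - 2*C3 + C2) *s y"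
    using xx yy xy
    by (simp add: m_diff_left m_diff_right m_commute[of y x] vec_eq_iff algebra_simps)
  have "det3 u (x - y) (m (x - y) (x - y))
      = ((C1 - 2*C3 + C2) + (B1 - 2*B3 + B2)) * det3 u x y"
    unfolding sq_diff by (simp add: det3_def algebra_simps)
  then have diff: "(C1 - 2*C3 + C2) + (B1 - 2*B3 + B2) = 0"
    using imprimitive[of "x - y"] D by simp
  have B1: "B1 = 2 * C3"
    using sum diff C1 B2 two_nonzero by Groebner_Basis.algebra
  have assoc_left: "m (m x x) y = (B1*A3) *s u + (B1*B3) *s x + (A1 + B1*C3) *s y"
    unfolding xx using xy C1
    by (simp add: m_add_left m_smult_left m_unit_left vec_eq_iff algebra_simps)
  have assoc_right: "m (m x x) y = (B3*A1 + C3*A3) *s u + (A3 + B3*B1 + C3*B3) *s x + (C3*C3) *s y"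
    unfolding m_assoc xy using xx xy C1
    by (simp add: m_add_right m_smult_right m_unit_right vec_eq_iff algebra_simps)
  have "C3*C3 = A1 + B1*C3"
    using coords_unique_3(3)[OF D trans[OF sym[OF assoc_left] assoc_right]] by simp
  then have A1: "A1 = - (C3 * C3)"
    using B1 by Groebner_Basis.algebra
  have "m (x - C3 *s u) (x - C3 *s u) = 0"
    using xx A1 B1 C1
    by (simp add: m_diff_left m_diff_right m_smult_left m_smult_right m_unit_left m_unit_right
        vec_eq_iff algebra_simps)
  then show ?thesis ..
qed

lemma exists_primitive_element: "\<exists>t. det3 u t (m t t) \<noteq> 0"
proof (rule ccontr)
  assume "\<nexists>t. det3 u t (m t t) \<noteq> 0"
  then have imprimitive: "\<And>t. det3 u t (m t t) = 0"
    by blast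
  obtain x y where D: "det3 u x y \<noteq> 0"
    using exists_basis_with_unit by blast
  obtain c where "m (x - c *s u) (x - c *s u) = 0"
    using square_zero_of_imprimitive[OF D imprimitive] by blast
  then have "x - c *s u = 0"
    by (rule square_zero_imp_zero)
  then have "x = c *s u"
    by simp
  then show False
    using D by (simp add: det3_def algebra_simps)
qed

end

lemma alg_closed_cubic_roots:
  fixes a b c :: "'k::alg_closed_field"
  obtains l1 l2 l3 where "l1 + l2 + l3 = a" "l1*l2 + l2*l3 + l3*l1 = b" "l1*l2*l3 = c"
proof -
  define f where
    "f = (\<lambda>k::nat. if k = 0 then -c else if k = 1 then b else if k = 2 then -a else 1)"
  obtain x where "(\<Sum>k\<le>3. f k * x ^ k) = 0"
    using alg_closed[of 3 f] by (auto simp: f_def)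
  then have x: "x^3 - a*x^2 + b*x - c = 0"
    by (simp add: f_def numeral_3_eq_3 atMost_Suc algebra_simps power2_eq_square power3_eq_cube)
  define p where "p = x - a"
  define q where "q = b + x * p"
  define g where "g = (\<lambda>k::nat. if k = 0 then q else if k = 1 then p else 1)"
  obtain y where "(\<Sum>k\<le>2. g k * y ^ k) = 0"
    using alg_closed[of 2 g] by (auto simp: g_def)
  then have y: "y^2 + p*y + q = 0"
    by (simp add: g_def numeral_2_eq_2 atMost_Suc algebra_simps power2_eq_square)
  show ?thesis
  proof (rule that[of x y "- p - y"])
    show "x + y + (- p - y) = a"
      by (simp add: p_def)
    show "x*y + y*(- p - y) + (- p - y)*x = b"
      using y unfolding q_def p_def by Groebner_Basis.algebra
    show "x*y*(- p - y) = c"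
      using x y unfolding q_def p_def by Groebner_Basis.algebra
  qed
qed

definition split_tr :: "'a::comm_ring_1^3 \<Rightarrow> 'a" where
  "split_tr x = x$1 + x$2 + x$3"

definition split_sec :: "'a::comm_ring_1^3 \<Rightarrow> 'a" where
  "split_sec x = x$1*x$2 + x$2*x$3 + x$3*x$1"

definition split_norm :: "'a::comm_ring_1^3 \<Rightarrow> 'a" where
  "split_norm x = x$1*x$2*x$3"

definition split_adj :: "'a::comm_ring_1^3 \<Rightarrow> 'a^3" where
  "split_adj x = vector [x$2*x$3, x$3*x$1, x$1*x$2]"

definition split_cross :: "'a::comm_ring_1^3 \<Rightarrow> 'a^3 \<Rightarrow> 'a^3" where
  "split_cross x y = split_adj (x + y) - split_adj x - split_adj y"

lemma split_adj_nth [simp]: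
  "split_adj x $ 1 = x$2*x$3" "split_adj x $ 2 = x$3*x$1" "split_adj x $ 3 = x$1*x$2"
  by (simp_all add: split_adj_def)

lemma split_cross_nth [simp]:
  "split_cross x y $ 1 = x$2*y$3 + x$3*y$2"
  "split_cross x y $ 2 = x$3*y$1 + x$1*y$3"
  "split_cross x y $ 3 = x$1*y$2 + x$2*y$1"
  by (simp_all add: split_cross_def algebra_simps)

section \<open>Embedding E into the split algebra over an algebraic closure\<close>

locale etale_cubic_splitting =
  etale_cubic_algebra m u for m :: "'f::field^3 \<Rightarrow> 'f^3 \<Rightarrow> 'f^3" and u +
  fixes t :: "'f^3" and lam :: "'f alg_closure^3"
  assumes primitive: "det3 u t (m t t) \<noteq> 0"
    and roots_sum: "lam$1 + lam$2 + lam$3 = to_ac (Etr m t)"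
    and roots_sec: "lam$1*lam$2 + lam$2*lam$3 + lam$3*lam$1 = to_ac (Esec m t)"
    and roots_prod: "lam$1*lam$2*lam$3 = to_ac (Enorm m t)"
begin

definition coord_u :: "'f^3 \<Rightarrow> 'f" where
  "coord_u z = det3 z t (m t t) / det3 u t (m t t)"

definition coord_t :: "'f^3 \<Rightarrow> 'f" where
  "coord_t z = det3 u z (m t t) / det3 u t (m t t)"

definition coord_t2 :: "'f^3 \<Rightarrow> 'f" where
  "coord_t2 z = det3 u t z / det3 u t (m t t)"

text \<open>Since E = F[t] is F[X] modulo the characteristic polynomial of t, psi evaluates an element
  at the three roots of that polynomial: it is the F-algebra map sending t to lam.\<close>
definition psi :: "'f^3 \<Rightarrow> 'f alg_closure^3" where
  "psi z =
    (\<chi> i. to_ac (coord_u z) + to_ac (coord_t z) * lam$i + to_ac (coord_t2 z) * (lam$i)^2)"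

lemma lam_root:
  "(lam$i)^3 = to_ac (Etr m t) * (lam$i)^2 - to_ac (Esec m t) * lam$i + to_ac (Enorm m t)"
proof -
  have "(lam$i - lam$1) * (lam$i - lam$2) * (lam$i - lam$3) = 0"
    using exhaust_3[of i] by auto
  then show ?thesis
    unfolding roots_sum[symmetric] roots_sec[symmetric] roots_prod[symmetric]
    by Groebner_Basis.algebra
qed

lemma t_cube: "m t (m t t) = Etr m t *s m t t - Esec m t *s t + Enorm m t *s u"
  using cayley_hamilton_E[of t] by (simp add: algebra_simps)

lemma t_fourth:
  "m (m t t) (m t t) = (Etr m t * Etr m t - Esec m t) *s m t t
    + (Enorm m t - Etr m t * Esec m t) *s t + (Etr m t * Enorm m t) *s u"
proof -
  have "m (m t t) (m t t) = m t (m t (m t t))"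
    by (simp only: m_assoc)
  also have "\<dots> = Etr m t *s m t (m t t) - Esec m t *s m t t + Enorm m t *s t"
    by (simp add: t_cube m_linear)
  finally show ?thesis
    by (simp add: t_cube vec_eq_iff algebra_simps)
qed

lemma coords: "z = coord_u z *s u + coord_t z *s t + coord_t2 z *s m t t"
  unfolding coord_u_def coord_t_def coord_t2_def by (rule cramer_3[OF primitive])

lemma psi_coords:
  assumes "z = a0 *s u + a1 *s t + a2 *s m t t"
  shows "psi z = (\<chi> i. to_ac a0 + to_ac a1 * lam$i + to_ac a2 * (lam$i)^2)"
proof -
  have "coord_u z *s u + coord_t z *s t + coord_t2 z *s m t t = a0 *s u + a1 *s t + a2 *s m t t"
    using coords assms by simp
  from coords_unique_3[OF primitive this] show ?thesis
    unfolding psi_def by simp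
qed

lemma m_coords:
  "m (a0 *s u + a1 *s t + a2 *s m t t) (b0 *s u + b1 *s t + b2 *s m t t) =
    (a0*b0 + (a1*b2 + a2*b1) * Enorm m t + a2*b2 * Etr m t * Enorm m t) *s u
  + (a0*b1 + a1*b0 - (a1*b2 + a2*b1) * Esec m t + a2*b2 * (Enorm m t - Etr m t * Esec m t)) *s t
  + (a0*b2 + a1*b1 + a2*b0 + (a1*b2 + a2*b1) * Etr m t
      + a2*b2 * (Etr m t * Etr m t - Esec m t)) *s m t t"
proof -
  have swap: "m (m t t) t = m t (m t t)"
    by (rule m_commute)
  show ?thesis
    by (simp add: m_linear swap t_cube t_fourth vec_eq_iff algebra_simps)
qed

lemma psi_add: "psi (x + y) = psi x + psi y"
proof -
  have sum: "x + y = (coord_u x + coord_u y) *s u + (coord_t x + coord_t y) *s t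
      + (coord_t2 x + coord_t2 y) *s m t t"
    by (subst coords[of x], subst coords[of y]) (simp add: vec_eq_iff algebra_simps)
  then show ?thesis
    unfolding psi_coords[OF sum] psi_coords[OF coords[of x]] psi_coords[OF coords[of y]]
    by (simp add: vec_eq_iff algebra_simps)
qed

lemma psi_smult: "psi (c *s x) = to_ac c *s psi x"
proof -
  have scaled: "c *s x = (c * coord_u x) *s u + (c * coord_t x) *s t + (c * coord_t2 x) *s m t t"
    by (subst coords[of x]) (simp add: vec_eq_iff algebra_simps)
  then show ?thesis
    unfolding psi_coords[OF scaled] psi_coords[OF coords[of x]]
    by (simp add: vec_eq_iff algebra_simps)
qed

lemma psi_unit: "psi u = 1"
  using psi_coords[of u 1 0 0] by (simp add: vec_eq_iff)

lemma psi_mult: "psi (m x y) = psi x * psi y"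
proof -
  have xy: "m x y = m (coord_u x *s u + coord_t x *s t + coord_t2 x *s m t t)
      (coord_u y *s u + coord_t y *s t + coord_t2 y *s m t t)"
    using coords[of x] coords[of y] by simp
  have "psi (m x y) $ i = (psi x * psi y) $ i" for i
    unfolding psi_coords[OF xy[unfolded m_coords]] psi_coords[OF coords[of x]]
      psi_coords[OF coords[of y]]
    using lam_root[of i] by simp Groebner_Basis.algebra
  then show ?thesis
    by (simp add: vec_eq_iff)
qed

lemma psi_zero: "psi 0 = 0"
  using psi_smult[of 0 0] by simp

lemma psi_minus: "psi (- x) = - psi x"
  using psi_smult[of "-1" x] by (simp add: vector_sneg_minus1[symmetric])

lemma psi_diff: "psi (x - y) = psi x - psi y"
  using psi_add[of x "- y"] psi_minus[of y] by simp

lemma psi_Etr: "to_ac (Etr m z) = split_tr (psi z)"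
proof -
  have Etr_t2: "Etr m (m t t) = Etr m t ^ 2 - 2 * Esec m t"
    using Esec_eq[of t] two_nonzero by (simp add: field_simps)
  have Etr_z: "Etr m z
      = 3 * coord_u z + coord_t z * Etr m t + coord_t2 z * (Etr m t ^ 2 - 2 * Esec m t)"
    by (subst coords) (simp add: Etr_add Etr_smult Etr_unit Etr_t2 algebra_simps)
  show ?thesis
    unfolding Etr_z psi_def split_tr_def
    by (simp add: roots_sum[symmetric] roots_sec[symmetric] algebra_simps power2_eq_square)
qed

lemma psi_inj: "psi x = psi y \<Longrightarrow> x = y"
proof -
  assume eq: "psi x = psi y"
  have "to_ac (Etr m (m x w)) = to_ac (Etr m (m y w))" for w
    by (simp add: psi_Etr psi_mult eq)
  then show "x = y"
    using trace_form_inj by simp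
qed

lemma psi_Esec: "to_ac (Esec m z) = split_sec (psi z)"
proof -
  have "(2::'f alg_closure) \<noteq> 0"
    using two_nonzero by (metis to_ac_eq_0_iff to_ac_numeral)
  then show ?thesis
    by (simp add: Esec_eq psi_Etr psi_mult split_tr_def split_sec_def field_simps power2_eq_square)
qed

lemma psi_Eadj: "psi (Eadj m u z) = split_adj (psi z)"
  by (simp add: Eadj_def psi_add psi_diff psi_smult psi_mult psi_unit psi_Etr psi_Esec
      vec_eq_iff forall_3 split_tr_def split_sec_def algebra_simps)

lemma psi_Enorm: "to_ac (Enorm m z) = split_norm (psi z)"
proof -
  have "psi (m z (Eadj m u z)) = to_ac (Enorm m z) *s 1"
    by (simp add: m_Eadj psi_smult psi_unit)
  then have "(psi z * split_adj (psi z)) $ 1 = to_ac (Enorm m z)"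
    by (simp add: psi_mult psi_Eadj)
  then show ?thesis
    by (simp add: split_norm_def algebra_simps)
qed

lemma psi_Ecross: "psi (Ecross m u x y) = split_cross (psi x) (psi y)"
  by (simp add: Ecross_def split_cross_def psi_diff psi_add psi_Eadj)

lemma psi_numeral: "psi (numeral k * x) = numeral k * psi x"
proof -
  have numeral_smult: "numeral k * x = (numeral k :: 'f) *s x"
    by (simp add: vec_eq_iff)
  show ?thesis
    unfolding numeral_smult by (simp add: psi_smult vec_eq_iff)
qed

lemma psi_pair_inj: "psi (fst p) = psi (fst q) \<Longrightarrow> psi (snd p) = psi (snd q) \<Longrightarrow> p = q"
  by (metis prod_eq_iff psi_inj)

lemmas psi_transfer = psi_zero psi_minus psi_diff psi_add psi_smult psi_numeral psi_mult psi_unit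
  psi_Eadj psi_Ecross psi_Etr psi_Enorm split_tr_def split_norm_def
  phi_Q_def phi_beta_def polar_def Cscal_def Delta_def

end

section \<open>The pair (Q, beta) attached to a cube\<close>

context etale_cubic_splitting
begin

lemma phi_Q_Cscal:
  "phi_Q m u (a,e,f,b) (Cscal m c (x,y)) = m (m c c) (phi_Q m u (a,e,f,b) (x,y))"
  apply (rule psi_inj)
  apply (simp add: psi_transfer)
  apply (simp add: vec_eq_iff forall_3)
  apply (intro conjI; Groebner_Basis.algebra)
  done

lemma polar_phi_Q_add:
  "polar (phi_Q m u (a,e,f,b)) ((x,y) + (x',y')) (z1,z2)
    = polar (phi_Q m u (a,e,f,b)) (x,y) (z1,z2) + polar (phi_Q m u (a,e,f,b)) (x',y') (z1,z2)"
  apply (rule psi_inj)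
  apply (simp add: psi_transfer)
  apply (simp add: vec_eq_iff forall_3)
  apply (intro conjI; Groebner_Basis.algebra)
  done

lemma polar_phi_Q_Cscal:
  "polar (phi_Q m u (a,e,f,b)) (Cscal m c (x,y)) (z1,z2)
    = m c (polar (phi_Q m u (a,e,f,b)) (x,y) (z1,z2))"
  apply (rule psi_inj)
  apply (simp add: psi_transfer)
  apply (simp add: vec_eq_iff forall_3)
  apply (intro conjI; Groebner_Basis.algebra)
  done

lemma polar_phi_Q_eq:
  "polar (phi_Q m u (a,e,f,b)) (x,y) (x',y') =
     2 *s m (Eadj m u e - a *s f) (m x x')
   + m (- (a * b) *s u - 2 *s m e f + Etr m (m e f) *s u) (m x y' + m x' y)
   + 2 *s m (Eadj m u f - b *s e) (m y y')"
  apply (rule psi_inj)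
  apply (simp add: psi_transfer)
  apply (simp add: vec_eq_iff forall_3)
  apply (intro conjI; Groebner_Basis.algebra)
  done

text \<open>Delta(v) u is the discriminant B^2 - 4 A C of Q = A x^2 + B x y + C y^2, so Cramer's rule
  for the Gram matrix of b_Q in the basis (u,0), (0,u) recovers x and y from b_Q((x,y), -).\<close>
lemma Delta_smult_fst:
  "Delta m u (a,e,f,b) *s x =
     m (- (a * b) *s u - 2 *s m e f + Etr m (m e f) *s u) (polar (phi_Q m u (a,e,f,b)) (x,y) (0,u))
   - 2 *s m (Eadj m u f - b *s e) (polar (phi_Q m u (a,e,f,b)) (x,y) (u,0))"
  apply (rule psi_inj)
  apply (simp add: psi_transfer)
  apply (simp add: vec_eq_iff forall_3)
  apply (intro conjI; Groebner_Basis.algebra)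
  done

lemma Delta_smult_snd:
  "Delta m u (a,e,f,b) *s y =
     m (- (a * b) *s u - 2 *s m e f + Etr m (m e f) *s u) (polar (phi_Q m u (a,e,f,b)) (x,y) (u,0))
   - 2 *s m (Eadj m u e - a *s f) (polar (phi_Q m u (a,e,f,b)) (x,y) (0,u))"
  apply (rule psi_inj)
  apply (simp add: psi_transfer)
  apply (simp add: vec_eq_iff forall_3)
  apply (intro conjI; Groebner_Basis.algebra)
  done

lemma polar_phi_Q_nondegenerate:
  assumes "Delta m u (a,e,f,b) \<noteq> 0" and "\<forall>w. polar (phi_Q m u (a,e,f,b)) (x,y) w = 0"
  shows "(x,y) = 0"
proof -
  have "Delta m u (a,e,f,b) *s x = 0" and "Delta m u (a,e,f,b) *s y = 0"
    unfolding Delta_smult_fst[of a e f b x y] Delta_smult_snd[of a e f b y x]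
    using assms(2) by (simp_all add: m_zero_right)
  then show ?thesis
    using assms(1) by (simp add: zero_prod_def)
qed

lemma polar_phi_beta_add:
  "polar (phi_beta m u (a,e,f,b)) ((x,y) + (x',y')) (z1,z2)
    = polar (phi_beta m u (a,e,f,b)) (x,y) (z1,z2) + polar (phi_beta m u (a,e,f,b)) (x',y') (z1,z2)"
  apply (rule psi_pair_inj)
  apply (simp_all add: psi_transfer)
  apply (simp_all add: vec_eq_iff forall_3)
  apply (intro conjI; Groebner_Basis.algebra)+
  done

lemma polar_phi_beta_Cscal_scalar:
  "polar (phi_beta m u (a,e,f,b)) (Cscal m (c *s u) (x,y)) (z1,z2)
    = Cscal m (c *s u) (polar (phi_beta m u (a,e,f,b)) (x,y) (z1,z2))"
  apply (rule psi_pair_inj)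
  apply (simp_all add: psi_transfer)
  apply (simp_all add: vec_eq_iff forall_3)
  apply (intro conjI; Groebner_Basis.algebra)+
  done

lemma phi_beta_Cscal:
  "phi_beta m u (a,e,f,b) (Cscal m c (x,y)) = Cscal m (Eadj m u c) (phi_beta m u (a,e,f,b) (x,y))"
  apply (rule psi_pair_inj)
  apply (simp_all add: psi_transfer)
  apply (simp_all add: vec_eq_iff forall_3)
  apply (intro conjI; Groebner_Basis.algebra)+
  done

lemma phi_Q_phi_beta:
  "phi_Q m u (a,e,f,b) (phi_beta m u (a,e,f,b) (x,y)) = Eadj m u (phi_Q m u (a,e,f,b) (x,y))"
  apply (rule psi_inj)
  apply (simp add: psi_transfer)
  apply (simp add: vec_eq_iff forall_3)
  apply (intro conjI; Groebner_Basis.algebra)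
  done

text \<open>psi maps F u onto the diagonal of K^3, so it suffices that the three coordinates of
  psi (b_Q(w, beta w)) agree.\<close>
lemma polar_phi_Q_phi_beta_scalar:
  "\<exists>c. polar (phi_Q m u (a,e,f,b)) (x,y) (phi_beta m u (a,e,f,b) (x,y)) = c *s u"
proof -
  define P where "P = polar (phi_Q m u (a,e,f,b)) (x,y) (phi_beta m u (a,e,f,b) (x,y))"
  have "psi P $ 1 = psi P $ 2" and "psi P $ 2 = psi P $ 3"
    unfolding P_def phi_beta_def polar_phi_Q_eq
    by (simp_all add: psi_transfer) Groebner_Basis.algebra+
  moreover have "(3::'f alg_closure) \<noteq> 0"
    using three_nonzero by (metis to_ac_eq_0_iff to_ac_numeral)
  ultimately have "psi P = psi ((Etr m P / 3) *s u)"
    by (simp add: psi_smult psi_unit psi_Etr split_tr_def vec_eq_iff forall_3 field_simps)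
  then have "P = (Etr m P / 3) *s u"
    by (rule psi_inj)
  then show ?thesis
    unfolding P_def ..
qed

lemma twisted_comp_alg_phi:
  assumes "Delta m u (a,e,f,b) \<noteq> 0"
  shows "twisted_comp_alg m u (phi_Q m u (a,e,f,b)) (phi_beta m u (a,e,f,b))"
  unfolding twisted_comp_alg_def
  using phi_Q_Cscal polar_phi_Q_add polar_phi_Q_Cscal polar_phi_Q_nondegenerate[OF assms]
    polar_phi_beta_add polar_phi_beta_Cscal_scalar phi_beta_Cscal phi_Q_phi_beta
    polar_phi_Q_phi_beta_scalar
  by (simp add: split_paired_all)

end

section \<open>Equivariance under GL_2(E)^0\<close>

text \<open>Expanding the cubic form P_v at (x,y) g = x (g11,g12) + y (g21,g22) in x and y gives the
  coefficients of the cube whose form is w \<mapsto> P_v(w g); g . v is this cube divided by det g.\<close>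
definition cube_transform :: "'f::field Emul \<Rightarrow> 'f^3 \<Rightarrow> 'f Emat \<Rightarrow> 'f cube \<Rightarrow> 'f cube" where
  "cube_transform m u g v = (case g of (g11, g12, g21, g22) \<Rightarrow> (case v of (a, e, f, b) \<Rightarrow>
    (cube_form m u v (g11, g12),
     a *s m g21 (Eadj m u g11) + m e (m g22 (Eadj m u g11)) + m g21 (Ecross m u (m e g12) g11)
       + m f (m g21 (Eadj m u g12)) + m g22 (Ecross m u (m f g11) g12) + b *s m g22 (Eadj m u g12),
     a *s m g11 (Eadj m u g21) + m e (m g12 (Eadj m u g21)) + m g11 (Ecross m u (m e g22) g21)
       + m f (m g11 (Eadj m u g22)) + m g12 (Ecross m u (m f g21) g22) + b *s m g12 (Eadj m u g22),
     cube_form m u v (g21, g22))))"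

definition cube_scale :: "'f::field \<Rightarrow> 'f cube \<Rightarrow> 'f cube" where
  "cube_scale c v = (case v of (a, e, f, b) \<Rightarrow> (c * a, c *s e, c *s f, c * b))"

context etale_cubic_algebra
begin

lemma Einv_smult_unit:
  assumes "d \<noteq> 0"
  shows "Einv m u (d *s u) = inverse d *s u"
  unfolding Einv_def
proof (rule the_equality)
  show "m (d *s u) (inverse d *s u) = u"
    using assms by (simp add: m_smult_left m_smult_right m_unit_left)
next
  fix w
  assume "m (d *s u) w = u"
  then have "d *s w = u"
    by (simp add: m_smult_left m_unit_left)
  then show "w = inverse d *s u"
    using assms by (auto simp: vec_eq_iff field_simps)
qed

lemma det_scalar_eq: "Emat_det m g = d *s u \<Longrightarrow> det_scalar m u g = d"
  unfolding det_scalar_def by (rule the_equality) (auto intro: smult_unit_cancel)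

lemma Emat_det_trans: "Emat_det m (Emat_trans g) = Emat_det m g"
  by (cases g) (simp add: Emat_det_def Emat_trans_def m_commute)

lemma Emat_inv_eq:
  assumes "Emat_det m (g11, g12, g21, g22) = d *s u" and "d \<noteq> 0"
  shows "Emat_inv m u (g11, g12, g21, g22)
    = (inverse d *s g22, - (inverse d *s g12), - (inverse d *s g21), inverse d *s g11)"
  using assms by (simp add: Emat_inv_def Einv_smult_unit m_smult_left m_unit_left)

lemma Emat_inv_inv:
  assumes "Emat_det m g = d *s u" and "d \<noteq> 0"
  shows "Emat_inv m u (Emat_inv m u g) = g"
proof -
  obtain g11 g12 g21 g22 where g: "g = (g11, g12, g21, g22)"
    by (cases g)
  have "Emat_det m (inverse d *s g22, - (inverse d *s g12), - (inverse d *s g21), inverse d *s g11)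
      = (inverse d * inverse d) *s Emat_det m g"
    by (simp add: g Emat_det_def m_linear m_commute[of g22] m_commute[of g21] vector_smult_assoc
        vector_ssub_ldistrib)
  also have "\<dots> = inverse d *s u"
    using assms by (simp add: vector_smult_assoc)
  finally show ?thesis
    using assms by (simp add: g Emat_inv_eq[of _ _ _ _ d] Emat_inv_eq[of _ _ _ _ "inverse d"]
        vector_smult_assoc)
qed

end

context etale_cubic_splitting
begin

lemma Eadj_smult_unit: "Eadj m u (d *s u) = (d * d) *s u"
  by (rule psi_inj) (simp add: psi_transfer vec_eq_iff forall_3)

lemma cube_form_cube_transform:
  "cube_form m u (cube_scale c (cube_transform m u (g11,g12,g21,g22) (a,e,f,b))) (x,y)
    = c * cube_form m u (a,e,f,b) (Emat_apply m (Emat_trans (g11,g12,g21,g22)) (x,y))"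
  apply (subst to_ac_eq_iff[symmetric])
  apply (simp add: psi_transfer Emat_apply_def Emat_trans_def cube_transform_def cube_scale_def
      cube_form_def)
  apply Groebner_Basis.algebra
  done

lemma phi_Q_cube_transform:
  "phi_Q m u (cube_scale c (cube_transform m u (g11,g12,g21,g22) (a,e,f,b))) (x,y)
    = (c * c) *s m (Eadj m u (Emat_det m (g11,g12,g21,g22)))
        (phi_Q m u (a,e,f,b) (Emat_apply m (Emat_trans (g11,g12,g21,g22)) (x,y)))"
  apply (rule psi_inj)
  apply (simp add: psi_transfer Emat_apply_def Emat_trans_def cube_transform_def cube_scale_def
      cube_form_def Emat_det_def)
  apply (simp add: vec_eq_iff forall_3)
  apply (intro conjI; Groebner_Basis.algebra)
  done

lemma phi_beta_cube_transform:
  "phi_beta m u (cube_scale c (cube_transform m u (g11,g12,g21,g22) (a,e,f,b))) (x,y)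
    = Emat_apply m (c *s g22, - (c *s g21), - (c *s g12), c *s g11)
        (phi_beta m u (a,e,f,b) (Emat_apply m (Emat_trans (g11,g12,g21,g22)) (x,y)))"
  apply (rule psi_pair_inj)
  apply (simp_all add: psi_transfer Emat_apply_def Emat_trans_def cube_transform_def cube_scale_def
      cube_form_def)
  apply (simp_all add: vec_eq_iff forall_3)
  apply (intro conjI; Groebner_Basis.algebra)+
  done

lemma cube_form_coeffs:
  "cube_form m u (a,e,f,b) (u,0) = a"
  "cube_form m u (a,e,f,b) (0,u) = b"
  "cube_form m u (a,e,f,b) (u,y) - cube_form m u (a,e,f,b) (u,-y)
    = 2 * Etr m (m e y) + 2 * b * Enorm m y"
  "cube_form m u (a,e,f,b) (x,u) - cube_form m u (a,e,f,b) (-x,u)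
    = 2 * a * Enorm m x + 2 * Etr m (m f x)"
  by (subst to_ac_eq_iff[symmetric], simp add: psi_transfer cube_form_def)+

lemma cube_form_inj:
  assumes "\<And>w. cube_form m u v w = cube_form m u v' w"
  shows "v = v'"
proof -
  obtain a e f b where v: "v = (a,e,f,b)"
    by (cases v)
  obtain a' e' f' b' where v': "v' = (a',e',f',b')"
    by (cases v')
  have a: "a = a'" and b: "b = b'"
    using assms[of "(u,0)"] assms[of "(0,u)"] by (simp_all add: v v' cube_form_coeffs)
  have "Etr m (m e y) = Etr m (m e' y)" for y
  proof -
    have "cube_form m u v (u,y) - cube_form m u v (u,-y)
        = cube_form m u v' (u,y) - cube_form m u v' (u,-y)"
      using assms by simp
    then have "2 * Etr m (m e y) + 2 * b * Enorm m y = 2 * Etr m (m e' y) + 2 * b' * Enorm m y"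
      by (simp only: v v' cube_form_coeffs)
    then show ?thesis
      using b two_nonzero by simp
  qed
  then have e: "e = e'"
    by (rule trace_form_inj)
  have "Etr m (m f x) = Etr m (m f' x)" for x
  proof -
    have "cube_form m u v (x,u) - cube_form m u v (-x,u)
        = cube_form m u v' (x,u) - cube_form m u v' (-x,u)"
      using assms by simp
    then have "2 * a * Enorm m x + 2 * Etr m (m f x) = 2 * a' * Enorm m x + 2 * Etr m (m f' x)"
      by (simp only: v v' cube_form_coeffs)
    then show ?thesis
      using a two_nonzero by simp
  qed
  then have f: "f = f'"
    by (rule trace_form_inj)
  show ?thesis
    using a b e f by (simp add: v v')
qed

lemma cube_act_eq:
  assumes "Emat_det m g = d *s u" and "d \<noteq> 0"
  shows "cube_act m u g v = cube_scale (inverse d) (cube_transform m u g v)"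
  unfolding cube_act_def det_scalar_eq[OF assms(1)]
proof (rule the_equality)
  show "\<forall>w. cube_form m u (cube_scale (inverse d) (cube_transform m u g v)) w
      = inverse d * cube_form m u v (Emat_apply m (Emat_trans g) w)"
    by (cases g, cases v) (auto simp: cube_form_cube_transform)
next
  fix v'
  assume "\<forall>w. cube_form m u v' w = inverse d * cube_form m u v (Emat_apply m (Emat_trans g) w)"
  then show "v' = cube_scale (inverse d) (cube_transform m u g v)"
    by (cases g, cases v) (auto intro: cube_form_inj simp: cube_form_cube_transform)
qed

lemma phi_cube_act:
  assumes "GL2_0 m u g"
  shows "phi m u (cube_act m u g v) = pair_act m u (Emat_inv m u (Emat_trans g)) (phi m u v)"
proof -
  obtain d where det: "Emat_det m g = d *s u" and d: "d \<noteq> 0"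
    using assms unfolding GL2_0_def by blast
  obtain g11 g12 g21 g22 where g: "g = (g11, g12, g21, g22)"
    by (cases g)
  obtain a e f b where v: "v = (a, e, f, b)"
    by (cases v)
  have det_trans: "Emat_det m (Emat_trans g) = d *s u"
    using det by (simp add: Emat_det_trans)
  have inv: "Emat_inv m u (Emat_trans g)
      = (inverse d *s g22, - (inverse d *s g21), - (inverse d *s g12), inverse d *s g11)"
    using Emat_inv_eq det_trans d by (simp add: g Emat_trans_def)
  have "inverse d * inverse d * (d * d) = 1"
    using d by (simp add: field_simps)
  then have "phi_Q m u (cube_act m u g v) (x,y) = phi_Q m u v (Emat_apply m (Emat_trans g) (x,y))"
    for x y
    unfolding cube_act_eq[OF det d] unfolding g v phi_Q_cube_transform det[unfolded g]
      Eadj_smult_unit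
    by (simp add: m_smult_left m_unit_left vector_smult_assoc)
  moreover have "phi_beta m u (cube_act m u g v) (x,y)
      = Emat_apply m (Emat_inv m u (Emat_trans g))
          (phi_beta m u v (Emat_apply m (Emat_trans g) (x,y)))"
    for x y
    unfolding cube_act_eq[OF det d] inv unfolding g v phi_beta_cube_transform ..
  ultimately show ?thesis
    by (auto simp: pair_act_def phi_def Emat_inv_inv[OF det_trans d] fun_eq_iff)
qed

lemma phi_beta_unit_fst: "phi_beta m u (a,e,f,b) (u,0) = (- e, a *s u)"
  and phi_beta_unit_snd: "phi_beta m u (a,e,f,b) (0,u) = (- (b *s u), f)"
  by (rule psi_pair_inj; simp add: psi_transfer vec_eq_iff forall_3)+

lemma inj_phi: "inj (phi m u)"
proof (rule injI)
  fix v v'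
  assume "phi m u v = phi m u v'"
  then have \<beta>: "phi_beta m u v = phi_beta m u v'"
    by (simp add: phi_def)
  obtain a e f b where v: "v = (a,e,f,b)"
    by (cases v)
  obtain a' e' f' b' where v': "v' = (a',e',f',b')"
    by (cases v')
  have "e = e'" "a = a'" "b = b'" "f = f'"
    using \<beta> phi_beta_unit_fst[of a e f b] phi_beta_unit_fst[of a' e' f' b']
      phi_beta_unit_snd[of a e f b] phi_beta_unit_snd[of a' e' f' b']
    by (simp_all add: v v' unit_nonzero)
  then show "v = v'"
    by (simp add: v v')
qed

end

section \<open>Equivariance under Aut_F(E)\<close>

context etale_cubic_algebra
begin

lemma F_alg_aut_hom:
  assumes "F_alg_aut m u \<sigma>"
  shows "\<sigma> (x + y) = \<sigma> x + \<sigma> y" and "\<sigma> (c *s x) = c *s \<sigma> x"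
    and "\<sigma> (- x) = - \<sigma> x" and "\<sigma> (x - y) = \<sigma> x - \<sigma> y"
    and "\<sigma> (m x y) = m (\<sigma> x) (\<sigma> y)" and "\<sigma> u = u"
proof -
  have add: "\<And>x y. \<sigma> (x + y) = \<sigma> x + \<sigma> y" and smult: "\<And>c x. \<sigma> (c *s x) = c *s \<sigma> x"
    using assms unfolding F_alg_aut_def by auto
  have minus: "\<sigma> (- x) = - \<sigma> x" for x
    using smult[of "-1" x] by (simp add: vector_sneg_minus1[symmetric])
  show "\<sigma> (x + y) = \<sigma> x + \<sigma> y" "\<sigma> (c *s x) = c *s \<sigma> x" "\<sigma> (- x) = - \<sigma> x"
    "\<sigma> (x - y) = \<sigma> x - \<sigma> y"
    using add[of x "- y"] by (simp_all add: add smult minus)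
  show "\<sigma> (m x y) = m (\<sigma> x) (\<sigma> y)" "\<sigma> u = u"
    using assms unfolding F_alg_aut_def by auto
qed

text \<open>Multiplication by \<sigma> x is conjugate to multiplication by x under the linear map \<sigma>.\<close>
lemma F_alg_aut_Etr:
  assumes \<sigma>: "F_alg_aut m u \<sigma>"
  shows "Etr m (\<sigma> x) = Etr m x"
proof -
  have lin: "Vector_Spaces.linear (*s) (*s) \<sigma>"
    by (rule vec_linearI) (simp_all add: F_alg_aut_hom[OF \<sigma>])
  have inj: "inj \<sigma>" and surj: "surj \<sigma>"
    using \<sigma> unfolding F_alg_aut_def by (simp_all add: bij_is_inj bij_is_surj)
  have P: "matrix \<sigma> *v y = \<sigma> y" for y
    by (rule matrix_works[OF lin])
  have Q: "matrix (inv_into UNIV \<sigma>) *v y = inv_into UNIV \<sigma> y" for y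
    by (rule matrix_works[OF vec.inj_linear_imp_inv_linear[OF lin inj]])
  have QP: "matrix (inv_into UNIV \<sigma>) ** matrix \<sigma> = mat 1"
    by (simp add: matrix_eq matrix_vector_mul_assoc[symmetric] P Q inv_f_f[OF inj])
  have "(matrix \<sigma> ** mult_mat m x ** matrix (inv_into UNIV \<sigma>)) *v y = mult_mat m (\<sigma> x) *v y"
    for y
  proof -
    have "(matrix \<sigma> ** mult_mat m x ** matrix (inv_into UNIV \<sigma>)) *v y
        = \<sigma> (m x (inv_into UNIV \<sigma> y))"
      by (simp only: matrix_vector_mul_assoc[symmetric] P Q mult_mat_apply)
    also have "\<dots> = m (\<sigma> x) y"
      by (simp only: F_alg_aut_hom(5)[OF \<sigma>] surj_f_inv_f[OF surj])
    finally show ?thesis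
      by (simp only: mult_mat_apply)
  qed
  then have conj: "mult_mat m (\<sigma> x) = matrix \<sigma> ** mult_mat m x ** matrix (inv_into UNIV \<sigma>)"
    by (simp add: matrix_eq)
  have "Etr m (\<sigma> x) = trace (matrix (inv_into UNIV \<sigma>) ** (matrix \<sigma> ** mult_mat m x))"
    unfolding Etr_def conj by (rule trace_mul_sym)
  also have "\<dots> = Etr m x"
    unfolding Etr_def matrix_mul_assoc QP by simp
  finally show ?thesis .
qed

lemma F_alg_aut_Eadj:
  assumes \<sigma>: "F_alg_aut m u \<sigma>"
  shows "\<sigma> (Eadj m u x) = Eadj m u (\<sigma> x)"
proof -
  have "Esec m (\<sigma> x) = Esec m x"
    by (simp add: Esec_eq F_alg_aut_Etr[OF \<sigma>] F_alg_aut_hom(5)[OF \<sigma>, symmetric])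
  then show ?thesis
    by (simp add: Eadj_def F_alg_aut_hom[OF \<sigma>] F_alg_aut_Etr[OF \<sigma>])
qed

lemma F_alg_aut_Ecross:
  assumes \<sigma>: "F_alg_aut m u \<sigma>"
  shows "\<sigma> (Ecross m u x y) = Ecross m u (\<sigma> x) (\<sigma> y)"
  by (simp add: Ecross_def F_alg_aut_hom[OF \<sigma>] F_alg_aut_Eadj[OF \<sigma>])

lemma phi_cube_gal:
  assumes \<sigma>: "F_alg_aut m u \<sigma>"
  shows "phi m u (cube_gal \<sigma> v) = pair_gal \<sigma> (phi m u v)"
proof -
  obtain a e f b where v: "v = (a, e, f, b)"
    by (cases v)
  have inv: "\<sigma> (inv_into UNIV \<sigma> x) = x" for x
    using \<sigma> unfolding F_alg_aut_def by (simp add: bij_is_surj surj_f_inv_f)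
  have Etr_m: "Etr m (m (\<sigma> x) (\<sigma> y)) = Etr m (m x y)" for x y
    by (simp add: F_alg_aut_hom(5)[OF \<sigma>, symmetric] F_alg_aut_Etr[OF \<sigma>])
  note \<sigma>_simps = F_alg_aut_hom[OF \<sigma>] F_alg_aut_Eadj[OF \<sigma>] F_alg_aut_Ecross[OF \<sigma>] Etr_m
  have "phi_Q m u (a, \<sigma> e, \<sigma> f, b) (\<sigma> x, \<sigma> y) = \<sigma> (phi_Q m u (a, e, f, b) (x, y))"
    and "phi_beta m u (a, \<sigma> e, \<sigma> f, b) (\<sigma> x, \<sigma> y)
      = map_prod \<sigma> \<sigma> (phi_beta m u (a, e, f, b) (x, y))"
    for x y
    by (simp_all add: phi_Q_def phi_beta_def \<sigma>_simps)
  from this[of "inv_into UNIV \<sigma> x" "inv_into UNIV \<sigma> y" for x y] show ?thesis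
    by (simp add: v inv cube_gal_def pair_gal_def phi_def fun_eq_iff)
qed

lemma exists_splitting: "\<exists>t lam. etale_cubic_splitting m u t lam"
proof -
  obtain t where "det3 u t (m t t) \<noteq> 0"
    using exists_primitive_element by blast
  moreover obtain l1 l2 l3 where "l1 + l2 + l3 = to_ac (Etr m t)"
    "l1*l2 + l2*l3 + l3*l1 = to_ac (Esec m t)" "l1*l2*l3 = to_ac (Enorm m t)"
    by (rule alg_closed_cubic_roots)
  ultimately have "etale_cubic_splitting m u t (vector [l1, l2, l3])"
    by unfold_locales simp_all
  then show ?thesis
    by blast
qed

end

theorem proposition10p1:
  fixes m :: "'f::field^3 \<Rightarrow> 'f^3 \<Rightarrow> 'f^3" and u :: "'f^3"
  assumes char2: "(2::'f) \<noteq> 0" and char3: "(3::'f) \<noteq> 0"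
    and E: "etale_cubic m u"
  shows "inj (phi m u)
    \<and> (\<forall>g v. GL2_0 m u g \<longrightarrow>
          phi m u (cube_act m u g v) = pair_act m u (Emat_inv m u (Emat_trans g)) (phi m u v))
    \<and> (\<forall>\<sigma> v. F_alg_aut m u \<sigma> \<longrightarrow> phi m u (cube_gal \<sigma> v) = pair_gal \<sigma> (phi m u v))
    \<and> (\<forall>v. Delta m u v \<noteq> 0 \<longrightarrow> twisted_comp_alg m u (fst (phi m u v)) (snd (phi m u v)))"
proof -
  interpret etale_cubic_algebra m u
    using E char2 char3 by unfold_locales
  obtain t lam where "etale_cubic_splitting m u t lam"
    using exists_splitting by blast
  then interpret etale_cubic_splitting m u t lam .
  have "twisted_comp_alg m u (fst (phi m u v)) (snd (phi m u v))" if "Delta m u v \<noteq> 0" for v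
    using that twisted_comp_alg_phi by (cases v) (simp add: phi_def)
  then show ?thesis
    using inj_phi phi_cube_act phi_cube_gal by blast
qed

end
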